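(* Let $0<|b_0|<\frac{2}{3\sqrt3}$ and $p(x,\xi)=\xi_0^3-(\xi_1^2+x_1^2\xi_n^2)\xi_0-b_0x_1^3\xi_n^3$ on $T^*\mathbb{R}^{n+1}$, and let $\Sigma_3=\{x_1=\xi_0=\xi_1=0\}$ (near points with $\xi_n\neq0$). For every $z\in\Sigma_3$ with $\xi_n\ne0$, the propagation cone $C_z$ contains a nonzero vector of $T_z\Sigma_3$, and $C_z$ is not contained in $T_z\Sigma_3$. In particular, $C_z$ is not transversal to $\Sigma_3$.
   Context: For a point $z$ where $p$ vanishes to order exactly $3$, the localization $p_z(X)$ is the lowest (third) order term of the Taylor expansion of $p$ at $z$, a polynomial on $T_z(T^*\mathbb{R}^{n+1})$. Since $p$ is hyperbolic with respect to $\xi_0$, the hyperbolicity cone $\Gamma_z$ is the connected component containing $N=(0;1,0,\dots,0)$ (i.e. $\delta\xi_0=1$, all other components $0$) of $\{X\in T_z(T^*\mathbb{R}^{n+1}):p_z(X)\ne0\}$. The propagation cone is $C_z=\{X\in T_z(T^*\mathbb{R}^{n+1}):\sigma(X,Y)\le0\ \forall Y\in\Gamma_z\}$, where $\sigma$ is the canonical symplectic form on $T^*\mathbb{R}^{n+1}$. $p$ vanishes exactly to order $3$ on $\Sigma_3$ under the assumption on $b_0$. *)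

theory Defs
  imports "HOL-Analysis.Analysis"
begin

text \<open>Points of the cotangent bundle T*R^(n+1) with coordinates
  (x_0,...,x_n; xi_0,...,xi_n) are modelled as pairs (x, xi) of functions
  nat => real that vanish at indices > n.  Since T*R^(n+1) is a vector space,
  each tangent space T_z(T*R^(n+1)) is identified with the same set.
  Topology: the (product) topology on nat => real, restricted to this set,
  which is the Euclidean topology of R^(2n+2).\<close>

type_synonym cpt = "(nat \<Rightarrow> real) \<times> (nat \<Rightarrow> real)"

definition phase_space :: "nat \<Rightarrow> cpt set" where
  "phase_space n = {(x, \<xi>). \<forall>i>n. x i = 0 \<and> \<xi> i = 0}"

definition symp :: "nat \<Rightarrow> cpt \<Rightarrow> cpt \<Rightarrow> real" where
  "symp n X Y = (\<Sum>i\<le>n. snd X i * fst Y i - fst X i * snd Y i)"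

definition shift :: "cpt \<Rightarrow> real \<Rightarrow> cpt \<Rightarrow> cpt" where
  "shift z t X = ((\<lambda>i. fst z i + t * fst X i), (\<lambda>i. snd z i + t * snd X i))"

text \<open>Localization at a point of vanishing order 3: the third order term of the
  Taylor expansion of p at z, i.e. (1/3!) (d/dt)^3 p(z + tX) at t = 0.\<close>
definition localization3 :: "(cpt \<Rightarrow> real) \<Rightarrow> cpt \<Rightarrow> cpt \<Rightarrow> real" where
  "localization3 p z X = (deriv ^^ 3) (\<lambda>t. p (shift z t X)) 0 / 6"

definition Nvec :: cpt where
  "Nvec = ((\<lambda>_. 0), (\<lambda>i. if i = 0 then 1 else 0))"

definition hyp_cone :: "nat \<Rightarrow> (cpt \<Rightarrow> real) \<Rightarrow> cpt \<Rightarrow> cpt set" where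
  "hyp_cone n p z =
     connected_component_set {X \<in> phase_space n. localization3 p z X \<noteq> 0} Nvec"

definition prop_cone :: "nat \<Rightarrow> (cpt \<Rightarrow> real) \<Rightarrow> cpt \<Rightarrow> cpt set" where
  "prop_cone n p z = {X \<in> phase_space n. \<forall>Y \<in> hyp_cone n p z. symp n X Y \<le> 0}"

definition p_ex :: "nat \<Rightarrow> real \<Rightarrow> cpt \<Rightarrow> real" where
  "p_ex n b0 z = (let x = fst z; \<xi> = snd z in
     \<xi> 0 ^ 3 - (\<xi> 1 ^ 2 + x 1 ^ 2 * \<xi> n ^ 2) * \<xi> 0 - b0 * x 1 ^ 3 * \<xi> n ^ 3)"

definition Sigma3 :: "nat \<Rightarrow> cpt set" where
  "Sigma3 n = {z \<in> phase_space n. fst z 1 = 0 \<and> snd z 0 = 0 \<and> snd z 1 = 0}"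

text \<open>Tangent space T_z Sigma_3 (Sigma_3 is a linear subspace, so it is the
  same linear subspace for every z in Sigma_3).\<close>
definition tangent_Sigma3 :: "nat \<Rightarrow> cpt \<Rightarrow> cpt set" where
  "tangent_Sigma3 n z = {X \<in> phase_space n. fst X 1 = 0 \<and> snd X 0 = 0 \<and> snd X 1 = 0}"

end

theory Submission
  imports Defs "HOL-Computational_Algebra.Polynomial"
begin

(* At a point z of Sigma_3 the symbol p vanishes to order three,
   and its localization is the cubic
       p_z(X) = eta_0^3 - (eta_1^2 + (c y_1)^2) eta_0 - b0 (c y_1)^3,   c = xi_n(z),
   in the tangent coordinates X = (y; eta).  The hyperbolicity cone Gamma_z, the
   component of {p_z <> 0} through N, is trapped in the open region
       eta_0 > 0,  eta_1^2 + (c y_1)^2 < 3 eta_0^2,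
   because for |b0| < 2/(3 sqrt 3) the cubic cannot be positive on the boundary of
   that region, so the region is relatively clopen in {p_z > 0}.  Pairing with
   position vectors (u; 0) gives sigma((u; 0), Y) = - sum_i u_i eta_i, hence
   (e_0; 0), which is tangent to Sigma_3, and (e_0 + e_1/2; 0), which is not,
   both lie in the propagation cone C_z. *)

lemma deriv_poly_fun: "deriv (\<lambda>t. poly q t) = (\<lambda>t. poly (pderiv q) t)"
  by (rule ext, rule DERIV_imp_deriv, simp)

lemma third_order_coeff:
  fixes f :: "real \<Rightarrow> real"
  assumes "\<And>t. f t = t ^ 3 * poly q t"
  shows "(deriv ^^ 3) f 0 / 6 = coeff q 0"
proof -
  have "f = poly (pCons 0 (pCons 0 (pCons 0 q)))"
    using assms by (auto simp: fun_eq_iff power3_eq_cube)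
  then have "(deriv ^^ 3) f = poly (pderiv (pderiv (pderiv (pCons 0 (pCons 0 (pCons 0 q))))))"
    by (simp add: numeral_3_eq_3 deriv_poly_fun)
  then show ?thesis
    by (simp add: pderiv_pCons poly_0_coeff_0 coeff_mult_0 numeral_poly)
qed

definition loc_cubic :: "real \<Rightarrow> real \<Rightarrow> cpt \<Rightarrow> real" where
  "loc_cubic b0 c X =
     snd X 0 ^ 3 - (snd X 1 ^ 2 + (c * fst X 1) ^ 2) * snd X 0 - b0 * (c * fst X 1) ^ 3"

text \<open>On Sigma_3 the localization of p is the cubic above: along z + tX the
  symbol is t^3 times a cubic polynomial in t whose constant term is p_z(X).\<close>
lemma localization_p_ex:
  assumes "n \<ge> 2" and "z \<in> Sigma3 n"
  shows "localization3 (p_ex n b0) z X = loc_cubic b0 (snd z n) X"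
proof -
  define a b d e c where "a = snd X 0" and "b = snd X 1" and "d = fst X 1"
    and "e = snd X n" and "c = snd z n"
  have z: "fst z 1 = 0" "snd z 0 = 0" "snd z 1 = 0"
    using assms(2) by (auto simp: Sigma3_def)
  define q where "q = [: a^3 - b^2*a - d^2*a*c^2 - b0*d^3*c^3,
                       - (2*d^2*a*c*e) - 3*b0*d^3*c^2*e,
                       - (d^2*a*e^2) - 3*b0*d^3*c*e^2,
                       - (b0*d^3*e^3) :]"
  have "p_ex n b0 (shift z t X)
          = (t*a)^3 - ((t*b)^2 + (t*d)^2*(c+t*e)^2)*(t*a) - b0*(t*d)^3*(c+t*e)^3" for t
    using z by (simp add: p_ex_def shift_def Let_def a_def b_def c_def d_def e_def)
  also have "\<dots> t = t ^ 3 * poly q t" for t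
    by (simp add: q_def) algebra
  finally have "localization3 (p_ex n b0) z X = coeff q 0"
    unfolding localization3_def by (rule third_order_coeff)
  then show ?thesis
    by (simp add: q_def loc_cubic_def a_def b_def c_def d_def power_mult_distrib algebra_simps)
qed

text \<open>For |b0| < 2/(3 sqrt 3) the cubic a^3 - (b^2 + w^2) a - b0 w^3 is not
  positive on the boundary {a = 0} or {3a^2 = b^2 + w^2} of the closed region
  a >= 0, b^2 + w^2 <= 3a^2; so positivity there forces the open region.\<close>
lemma cubic_positive_interior:
  fixes a b w b0 :: real
  assumes b0: "\<bar>b0\<bar> < 2 / (3 * sqrt 3)"
    and a: "a \<ge> 0" and q: "b^2 + w^2 \<le> 3*a^2"
    and P: "a^3 - (b^2 + w^2)*a - b0*w^3 > 0"
  shows "a > 0 \<and> b^2 + w^2 < 3*a^2"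
proof -
  have "a \<noteq> 0"
  proof
    assume "a = 0"
    with q have "b^2 + w^2 \<le> 0" by simp
    then have "w^2 \<le> 0" using zero_le_power2[of b] by linarith
    then have "w = 0" by simp
    with P \<open>a = 0\<close> show False by simp
  qed
  with a have a0: "a > 0" by simp
  moreover have "3*a^2 \<noteq> b^2 + w^2"
  proof
    assume e: "3*a^2 = b^2 + w^2"
    then have Pe: "a^3 - (b^2 + w^2)*a - b0*w^3 = -2*a^3 - b0*w^3"
      by (simp add: power3_eq_cube power2_eq_square algebra_simps)
    have "w^2 \<le> (sqrt 3 * a)^2" using e by (simp add: power_mult_distrib)
    then have "sqrt (w^2) \<le> sqrt ((sqrt 3 * a)^2)" by (rule real_sqrt_le_mono)
    then have "\<bar>w\<bar> \<le> sqrt 3 * a" using a0 by simp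
    then have "\<bar>w\<bar>^3 \<le> (sqrt 3 * a)^3" by (simp add: power_mono)
    also have "\<dots> = 3 * sqrt 3 * a^3" by (simp add: power_mult_distrib power3_eq_cube)
    finally have w3: "\<bar>w\<bar>^3 \<le> 3 * sqrt 3 * a^3" .
    have "\<bar>b0 * w^3\<bar> = \<bar>b0\<bar> * \<bar>w\<bar>^3" by (simp add: abs_mult power_abs)
    also have "\<dots> \<le> \<bar>b0\<bar> * (3 * sqrt 3 * a^3)" using w3 by (simp add: mult_left_mono)
    also have "\<dots> < (2 / (3 * sqrt 3)) * (3 * sqrt 3 * a^3)"
      using b0 a0 by (intro mult_strict_right_mono) auto
    also have "\<dots> = 2 * a^3" by simp
    finally show False using P Pe by linarith
  qed
  ultimately show ?thesis using q by simp
qed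

text \<open>If S meets the closed set F only inside its open subset A, then A and the
  complement of F separate S, so a component of S starting in A stays in A.\<close>
lemma connected_component_trapped:
  fixes S :: "'a::topological_space set"
  assumes "open A" and "closed F" and "A \<subseteq> F" and "S \<inter> F \<subseteq> A" and "x \<in> A"
  shows "connected_component_set S x \<subseteq> A"
proof (cases "x \<in> S")
  case True
  let ?K = "connected_component_set S x"
  have K: "connected ?K" "?K \<subseteq> S" "x \<in> ?K"
    by (simp_all add: connected_component_subset True)
  have "open (- F)" using assms(2) by (simp add: open_Compl)
  moreover have "?K \<subseteq> A \<union> - F" "A \<inter> - F \<inter> ?K = {}" "A \<inter> ?K \<noteq> {}"
    using K(2,3) assms(3,4,5) by blast+
  ultimately have "- F \<inter> ?K = {}"
    using K(1) assms(1) unfolding connected_def by blast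
  then show ?thesis using K(2) assms(4) by blast
qed (metis connected_component_eq_empty empty_subsetI)

lemma continuous_on_coordinate:
  "continuous_on UNIV (\<lambda>Y::cpt. snd Y i)" "continuous_on UNIV (\<lambda>Y::cpt. fst Y i)"
  by (rule continuous_on_compose2[of UNIV "\<lambda>f. f i"]; auto intro: continuous_intros)+

text \<open>Gamma_z lies in the open region eta_0 > 0, eta_1^2 + (c y_1)^2 < 3 eta_0^2.
  This region, intersected with {p_z > 0}, is open; its closure-type version F
  (non-strict inequalities) is closed; and the boundary estimate shows that
  {p_z \<noteq> 0} meets F only inside that region.\<close>
lemma hyp_cone_region:
  assumes n: "n \<ge> 2" and b0: "\<bar>b0\<bar> < 2 / (3 * sqrt 3)" and z: "z \<in> Sigma3 n"
    and Y: "Y \<in> hyp_cone n (p_ex n b0) z"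
  shows "snd Y 0 > 0 \<and> (snd Y 1)^2 + (snd z n * fst Y 1)^2 < 3*(snd Y 0)^2"
proof -
  define c where "c = snd z n"
  define P where "P = loc_cubic b0 c"
  define S where "S = {X \<in> phase_space n. P X \<noteq> 0}"
  define A where
    "A = {Y::cpt. 0 < snd Y 0 \<and> (snd Y 1)^2 + (c*fst Y 1)^2 < 3*(snd Y 0)^2 \<and> 0 < P Y}"
  define F where
    "F = {Y::cpt. 0 \<le> snd Y 0 \<and> (snd Y 1)^2 + (c*fst Y 1)^2 \<le> 3*(snd Y 0)^2 \<and> 0 \<le> P Y}"
  have cont: "continuous_on UNIV P"
    "continuous_on UNIV (\<lambda>Y::cpt. (snd Y 1)^2 + (c*fst Y 1)^2)"
    "continuous_on UNIV (\<lambda>Y::cpt. 3*(snd Y 0)^2)"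
    unfolding P_def loc_cubic_def by (intro continuous_intros continuous_on_coordinate)+
  have "open A" unfolding A_def Collect_conj_eq
    by (intro open_Int open_Collect_less cont continuous_on_coordinate continuous_on_const)
  moreover have "closed F" unfolding F_def Collect_conj_eq
    by (intro closed_Int closed_Collect_le cont continuous_on_coordinate continuous_on_const)
  moreover have "A \<subseteq> F" unfolding A_def F_def by auto
  moreover have "S \<inter> F \<subseteq> A"
    using cubic_positive_interior[OF b0]
    unfolding S_def F_def A_def P_def loc_cubic_def by fastforce
  moreover have "Nvec \<in> A" unfolding A_def P_def loc_cubic_def Nvec_def by simp
  ultimately have "connected_component_set S Nvec \<subseteq> A"
    by (rule connected_component_trapped)
  moreover have "hyp_cone n (p_ex n b0) z = connected_component_set S Nvec"
    unfolding hyp_cone_def S_def P_def c_def using localization_p_ex[OF n z] by simp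
  ultimately show ?thesis using Y unfolding A_def c_def by auto
qed

lemma hyp_cone_wedge:
  assumes "n \<ge> 2" and "\<bar>b0\<bar> < 2 / (3 * sqrt 3)" and "z \<in> Sigma3 n"
    and "Y \<in> hyp_cone n (p_ex n b0) z"
  shows "\<bar>snd Y 1\<bar> < 2 * snd Y 0"
proof -
  have pos: "snd Y 0 > 0" and bound: "(snd Y 1)^2 + (snd z n * fst Y 1)^2 < 3*(snd Y 0)^2"
    using hyp_cone_region[OF assms] by blast+
  have "(2 * snd Y 0)^2 = 4 * (snd Y 0)^2" by (simp add: power_mult_distrib)
  then have "(snd Y 1)^2 < (2 * snd Y 0)^2"
    using bound zero_le_power2[of "snd z n * fst Y 1"] zero_le_power2[of "snd Y 0"] by linarith
  then have "\<bar>snd Y 1\<bar>^2 < (2 * snd Y 0)^2" by simp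
  from power2_less_imp_less[OF this] pos show ?thesis by simp
qed

lemma symp_position:
  "symp n (u, \<lambda>_. 0) Y = - (\<Sum>i\<le>n. u i * snd Y i)"
  by (simp add: symp_def sum_negf)

definition pos_vec :: "real \<Rightarrow> real \<Rightarrow> cpt" where
  "pos_vec \<alpha> \<beta> = ((\<lambda>i. if i = 0 then \<alpha> else if i = 1 then \<beta> else 0), (\<lambda>_. 0))"

lemma pos_vec_pairing:
  assumes "n \<ge> 1"
  shows "symp n (pos_vec \<alpha> \<beta>) Y = - (\<alpha> * snd Y 0 + \<beta> * snd Y 1)"
proof -
  have "(\<Sum>i\<le>n. (if i = 0 then \<alpha> else if i = 1 then \<beta> else 0) * snd Y i)
        = (\<Sum>i\<le>n. if i = 0 then \<alpha> * snd Y i else 0) + (\<Sum>i\<le>n. if i = 1 then \<beta> * snd Y i else 0)"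
    unfolding sum.distrib[symmetric] by (rule sum.cong) auto
  then show ?thesis using assms by (simp add: pos_vec_def symp_position)
qed

text \<open>By the wedge property, alpha e_0 + beta e_1 lies in C_z as soon as
  2 |beta| <= alpha: then alpha eta_0 + beta eta_1 >= alpha eta_0 - |beta| 2 eta_0 >= 0.\<close>
lemma pos_vec_in_prop_cone:
  assumes "n \<ge> 2" and "\<bar>b0\<bar> < 2 / (3 * sqrt 3)" and "z \<in> Sigma3 n"
    and "2 * \<bar>\<beta>\<bar> \<le> \<alpha>"
  shows "pos_vec \<alpha> \<beta> \<in> prop_cone n (p_ex n b0) z"
  unfolding prop_cone_def
proof (intro CollectI conjI ballI)
  show "pos_vec \<alpha> \<beta> \<in> phase_space n"
    using assms(1) by (simp add: pos_vec_def phase_space_def)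
next
  fix Y assume "Y \<in> hyp_cone n (p_ex n b0) z"
  then have wedge: "\<bar>snd Y 1\<bar> < 2 * snd Y 0" by (rule hyp_cone_wedge[OF assms(1-3)])
  have "- (\<beta> * snd Y 1) \<le> \<bar>\<beta>\<bar> * \<bar>snd Y 1\<bar>" using abs_ge_minus_self[of "\<beta> * snd Y 1"] by (simp add: abs_mult)
  also have "\<dots> \<le> \<bar>\<beta>\<bar> * (2 * snd Y 0)" using wedge by (simp add: mult_left_mono)
  also have "\<dots> = (2 * \<bar>\<beta>\<bar>) * snd Y 0" by simp
  also have "\<dots> \<le> \<alpha> * snd Y 0" using assms(4) wedge by (intro mult_right_mono) auto
  finally show "symp n (pos_vec \<alpha> \<beta>) Y \<le> 0" using assms(1) by (simp add: pos_vec_pairing)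
qed

lemma pos_vec_tangent_iff:
  "pos_vec \<alpha> \<beta> \<in> tangent_Sigma3 n z \<longleftrightarrow> pos_vec \<alpha> \<beta> \<in> phase_space n \<and> \<beta> = 0"
  by (simp add: pos_vec_def tangent_Sigma3_def)

text \<open>e_0 is a nonzero tangent vector of Sigma_3 in C_z, while e_0 + e_1/2 lies
  in C_z but is not tangent to Sigma_3.\<close>
theorem mainTheorem9:
  fixes n :: nat and b0 :: real and z :: cpt
  assumes "n \<ge> 2"
    and "0 < \<bar>b0\<bar>" and "\<bar>b0\<bar> < 2 / (3 * sqrt 3)"
    and "z \<in> Sigma3 n" and "snd z n \<noteq> 0"
  shows "(\<exists>X \<in> prop_cone n (p_ex n b0) z. X \<in> tangent_Sigma3 n z \<and> X \<noteq> ((\<lambda>_. 0), (\<lambda>_. 0)))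
         \<and> \<not> prop_cone n (p_ex n b0) z \<subseteq> tangent_Sigma3 n z"
proof -
  have e0: "pos_vec 1 0 \<in> prop_cone n (p_ex n b0) z"
    and e0_e1: "pos_vec 1 (1/2) \<in> prop_cone n (p_ex n b0) z"
    by (rule pos_vec_in_prop_cone[OF assms(1,3,4)]; simp)+
  have "pos_vec 1 0 \<in> tangent_Sigma3 n z"
    using e0 by (simp add: pos_vec_tangent_iff prop_cone_def)
  moreover have "pos_vec 1 0 \<noteq> ((\<lambda>_. 0), (\<lambda>_. 0))"
    by (simp add: pos_vec_def fun_eq_iff)
  moreover have "pos_vec 1 (1/2) \<notin> tangent_Sigma3 n z"
    by (simp add: pos_vec_tangent_iff)
  ultimately show ?thesis using e0 e0_e1 by blast
qed

end
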